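(* Assume we are either in the $\delta$-algebraic setting or in the $\delta$-arithmetic setting, and let $n\geq 2$. Let $\alpha:R^{\times}\times R^{n-1}\rightarrow R$ be a $\delta$-map and $\lambda\in R^{n-1}$ a row vector such that for all $(a_1,b_1),(a_2,b_2)\in R^{\times}\times R^{n-1}$, $$\alpha(a_1a_2,b_1+a_1b_2)=\alpha(a_1,b_1)+\alpha(a_2,b_2)+a_1^{-1}(1-a_2^{-1})b_1\lambda^t.$$ Then for all $a_1,a_2,a\in R^{\times}$ and $b\in R^{n-1}$, $$\alpha(a_1a_2,0)=\alpha(a_1,0)+\alpha(a_2,0),\qquad \alpha(a,b)=\alpha(a,0)-a^{-1}b\lambda^t.$$
   Context: Elements of $R^{n-1}$ are row vectors, $t$ denotes transpose, so $b\lambda^t\in R$. $\delta$-arithmetic setting: $p$ odd prime, $R$ the complete discrete valuation ring with maximal ideal $pR$ and residue field $\mathbb{F}_p^a$, $\phi$ the Frobenius lift on $R$, $\delta x=(\phi(x)-x^p)/p$; a $\delta$-map $R^{\times}\times R^{n-1}\to R^M$ is one of the form $(a,b)\mapsto F(a,b,\delta a,\delta b,\dots,\delta^m a,\delta^m b)$ with $F$ an $M$-tuple of restricted power series over $R$ ($p$-adically completed) in these variables and the inverse of the variable for $a$. $\delta$-algebraic setting: $R$ a $\delta$-closed (Kolchin's constrainedly closed) field of characteristic zero with derivation $\delta$; $\delta$-maps defined the same way with $F$ polynomial over $R$. *)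

theory Defs
  imports "HOL-Analysis.Finite_Cartesian_Product" "HOL-Computational_Algebra.Polynomial"
begin

definition uinv :: "'r::comm_ring_1 \<Rightarrow> 'r" where
  "uinv a = (THE x. a * x = 1)"

inductive pf :: "'v set \<Rightarrow> (('v \<Rightarrow> 'r::comm_ring_1) \<Rightarrow> 'r) \<Rightarrow> bool" for V where
  pf_const: "pf V (\<lambda>_. c)"
| pf_var: "v \<in> V \<Longrightarrow> pf V (\<lambda>x. x v)"
| pf_add: "pf V f \<Longrightarrow> pf V g \<Longrightarrow> pf V (\<lambda>x. f x + g x)"
| pf_mult: "pf V f \<Longrightarrow> pf V g \<Longrightarrow> pf V (\<lambda>x. f x * g x)"

text \<open>Variables of a delta-map on R^x * R^(n-1): the inverse of the variable a,
  delta^j a, and delta^j b_i.\<close>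
datatype 'k jvar = VInv | VA nat | VB nat 'k

definition jvars :: "nat \<Rightarrow> 'k jvar set" where
  "jvars m = {VInv} \<union> {VA j | j. j \<le> m} \<union> {VB j i | j i. j \<le> m}"

fun jet :: "('r::comm_ring_1 \<Rightarrow> 'r) \<Rightarrow> 'r \<Rightarrow> 'r ^ 'k \<Rightarrow> 'k jvar \<Rightarrow> 'r" where
  "jet \<delta> a b VInv = uinv a"
| "jet \<delta> a b (VA j) = (\<delta> ^^ j) a"
| "jet \<delta> a b (VB j i) = (\<delta> ^^ j) (b $ i)"

definition depends_upto :: "((nat \<Rightarrow> 'r) \<Rightarrow> 'r) \<Rightarrow> nat \<Rightarrow> bool" where
  "depends_upto f m \<longleftrightarrow> (\<forall>x y. (\<forall>i<m. x i = y i) \<longrightarrow> f x = f y)"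

text \<open>delta-algebraic setting: R a field of characteristic zero with a derivation
  delta that is delta-closed (Kolchin's constrainedly closed = differentially
  closed), expressed by Blum's axioms.\<close>
definition alg_setting :: "('r::idom \<Rightarrow> 'r) \<Rightarrow> bool" where
  "alg_setting \<delta> \<longleftrightarrow>
     (\<forall>x::'r. x \<noteq> 0 \<longrightarrow> x dvd 1) \<and> inj (of_nat :: nat \<Rightarrow> 'r) \<and>
     (\<forall>x y. \<delta> (x + y) = \<delta> x + \<delta> y) \<and>
     (\<forall>x y. \<delta> (x * y) = x * \<delta> y + y * \<delta> x) \<and>
     (\<forall>f g m. pf (UNIV::nat set) f \<and> pf (UNIV::nat set) g \<and>
        depends_upto f (Suc m) \<and> \<not> depends_upto f m \<and> depends_upto g m \<and>
        (\<exists>x. g x \<noteq> 0) \<longrightarrow>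
        (\<exists>a. f (\<lambda>i. (\<delta> ^^ i) a) = 0 \<and> g (\<lambda>i. (\<delta> ^^ i) a) \<noteq> 0))"

definition alg_dmap :: "('r::idom \<Rightarrow> 'r) \<Rightarrow> ('r \<Rightarrow> 'r ^ 'k \<Rightarrow> 'r) \<Rightarrow> bool" where
  "alg_dmap \<delta> \<alpha> \<longleftrightarrow> (\<exists>m P. pf (jvars m) P \<and>
      (\<forall>a b. a dvd 1 \<longrightarrow> \<alpha> a b = P (jet \<delta> a b)))"

text \<open>delta-arithmetic setting: R a p-adically complete DVR with maximal ideal pR,
  residue field an algebraic closure of F_p (algebraic over F_p and algebraically
  closed), phi a Frobenius lift, delta x = (phi x - x^p)/p.\<close>
definition arith_setting :: "nat \<Rightarrow> ('r::idom \<Rightarrow> 'r) \<Rightarrow> ('r \<Rightarrow> 'r) \<Rightarrow> bool" where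
  "arith_setting p \<phi> \<delta> \<longleftrightarrow>
     prime p \<and> odd p \<and>
     of_nat p \<noteq> (0::'r) \<and> \<not> (of_nat p :: 'r) dvd 1 \<and>
     (\<forall>x::'r. x \<noteq> 0 \<longrightarrow> (\<exists>u k. u dvd 1 \<and> x = u * of_nat p ^ k)) \<and>
     (\<forall>x::'r. (\<forall>k. (of_nat p) ^ k dvd x) \<longrightarrow> x = 0) \<and>
     (\<forall>s::nat \<Rightarrow> 'r. (\<forall>k. (of_nat p) ^ k dvd (s (Suc k) - s k)) \<longrightarrow>
        (\<exists>L. \<forall>k. (of_nat p) ^ k dvd (L - s k))) \<and>
     (\<forall>x::'r. \<exists>k\<ge>1. of_nat p dvd (x ^ (p ^ k) - x)) \<and>
     (\<forall>q::'r poly. degree q \<ge> 1 \<longrightarrow> lead_coeff q = 1 \<longrightarrow> (\<exists>x. of_nat p dvd poly q x)) \<and>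
     (\<forall>x y. \<phi> (x + y) = \<phi> x + \<phi> y) \<and> (\<forall>x y. \<phi> (x * y) = \<phi> x * \<phi> y) \<and> \<phi> 1 = 1 \<and>
     (\<forall>x. of_nat p * \<delta> x = \<phi> x - x ^ p)"

text \<open>delta-maps in the delta-arithmetic setting: F a restricted power series,
  i.e. (on points with a a unit) a p-adically uniform limit of polynomial functions
  in a finite set of jet variables.\<close>
definition arith_dmap :: "nat \<Rightarrow> ('r::idom \<Rightarrow> 'r) \<Rightarrow> ('r \<Rightarrow> 'r ^ 'k \<Rightarrow> 'r) \<Rightarrow> bool" where
  "arith_dmap p \<delta> \<alpha> \<longleftrightarrow> (\<exists>m. \<forall>k. \<exists>P. pf (jvars m) P \<and>
      (\<forall>a b. a dvd 1 \<longrightarrow> (of_nat p) ^ k dvd (\<alpha> a b - P (jet \<delta> a b))))"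

definition vdot :: "'r::comm_ring_1 ^ 'k \<Rightarrow> 'r ^ 'k \<Rightarrow> 'r" where
  "vdot b l = (\<Sum>i\<in>UNIV. b $ i * l $ i)"

end

theory Submission
  imports Defs
begin

text \<open>Comparing the identity at
  (-1, b), (1, b) with the one at (1, b), (-1, 0) gives 2 (\<alpha>(1, b) + b\<lambda>^t) = 0; the
  identity at (1, b), (a, 0) then splits \<alpha>(a, b) into \<alpha>(a, 0) and the linear term.\<close>

lemma uinv_eq:
  fixes a x :: "'r::idom"
  assumes "a * x = 1"
  shows "uinv a = x"
  unfolding uinv_def
proof (rule the_equality)
  show "a * x = 1" by fact
  fix y assume "a * y = 1"
  with assms have "a * y = a * x" "a \<noteq> 0" by auto
  then show "y = x" by simp
qed

lemma uinv_one [simp]: "uinv (1::'r::idom) = 1"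
  by (rule uinv_eq) simp

lemma uinv_neg_one [simp]: "uinv (-1::'r::idom) = -1"
  by (rule uinv_eq) simp

lemma vdot_zero_left [simp]: "vdot 0 l = 0"
  unfolding vdot_def by simp

lemma alg_setting_two_neq_zero:
  assumes "alg_setting (\<delta>::'r::idom \<Rightarrow> 'r)"
  shows "(2::'r) \<noteq> 0"
proof -
  from assms have "inj (of_nat :: nat \<Rightarrow> 'r)" unfolding alg_setting_def by blast
  then have "(of_nat 2::'r) \<noteq> of_nat 0" by (metis injD zero_neq_numeral)
  then show ?thesis by simp
qed

lemma arith_setting_two_neq_zero:
  assumes "arith_setting p \<phi> (\<delta>::'r::idom \<Rightarrow> 'r)"
  shows "(2::'r) \<noteq> 0"
proof
  assume two: "(2::'r) = 0"
  from assms have "odd p" and p_nonunit: "\<not> (of_nat p :: 'r) dvd 1"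
    unfolding arith_setting_def by blast+
  then obtain k where "p = 2 * k + 1" using oddE by blast
  with two have "(of_nat p::'r) = 1" by simp
  with p_nonunit show False by simp
qed

lemma cocycle_at_one:
  fixes \<alpha> :: "'r::idom \<Rightarrow> 'r ^ 'k \<Rightarrow> 'r"
  assumes two: "(2::'r) \<noteq> 0"
    and hom: "\<And>a1 a2 b1 b2. a1 dvd 1 \<Longrightarrow> a2 dvd 1 \<Longrightarrow>
       \<alpha> (a1 * a2) (b1 + a1 *s b2) = \<alpha> a1 b1 + \<alpha> a2 b2 + uinv a1 * (1 - uinv a2) * vdot b1 lam"
  shows "\<alpha> 1 b = - vdot b lam"
proof -
  have unit_neg_one: "(-1::'r) dvd 1" by simp
  have "b + (-1::'r) *s b = 0" by (simp add: vec_eq_iff)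
  with hom[OF unit_neg_one one_dvd, of b b]
  have "\<alpha> (-1) 0 = \<alpha> (-1) b + \<alpha> 1 b" by simp
  moreover have "\<alpha> (-1) b = \<alpha> 1 b + \<alpha> (-1) 0 + 2 * vdot b lam"
    using hom[OF one_dvd unit_neg_one, of b 0] by simp
  ultimately have "2 * (\<alpha> 1 b + vdot b lam) = 0" by (simp add: algebra_simps)
  with two have "\<alpha> 1 b + vdot b lam = 0" by (simp only: mult_eq_0_iff) simp
  then show ?thesis by (simp add: eq_neg_iff_add_eq_0)
qed

lemma cocycle_decompose:
  fixes \<alpha> :: "'r::idom \<Rightarrow> 'r ^ 'k \<Rightarrow> 'r"
  assumes two: "(2::'r) \<noteq> 0"
    and hom: "\<And>a1 a2 b1 b2. a1 dvd 1 \<Longrightarrow> a2 dvd 1 \<Longrightarrow>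
       \<alpha> (a1 * a2) (b1 + a1 *s b2) = \<alpha> a1 b1 + \<alpha> a2 b2 + uinv a1 * (1 - uinv a2) * vdot b1 lam"
    and a: "a dvd 1"
  shows "\<alpha> a b = \<alpha> a 0 - uinv a * vdot b lam"
proof -
  have "\<alpha> a b = \<alpha> 1 b + \<alpha> a 0 + (1 - uinv a) * vdot b lam"
    using hom[OF one_dvd a, of b 0] by simp
  with cocycle_at_one[OF two hom] show ?thesis by (simp add: algebra_simps)
qed

theorem lemma3p7:
  fixes n :: nat and \<delta> \<phi> :: "'r::idom \<Rightarrow> 'r" and p :: nat
    and \<alpha> :: "'r \<Rightarrow> 'r ^ 'k \<Rightarrow> 'r" and lam :: "'r ^ 'k"
  assumes setting: "(alg_setting \<delta> \<and> alg_dmap \<delta> \<alpha>) \<or>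
                    (arith_setting p \<phi> \<delta> \<and> arith_dmap p \<delta> \<alpha>)"
    and n: "n \<ge> 2" "CARD('k) = n - 1"
    and hom: "\<And>a1 a2 b1 b2. a1 dvd 1 \<Longrightarrow> a2 dvd 1 \<Longrightarrow>
       \<alpha> (a1 * a2) (b1 + a1 *s b2) =
         \<alpha> a1 b1 + \<alpha> a2 b2 + uinv a1 * (1 - uinv a2) * vdot b1 lam"
  shows "(\<forall>a1 a2. a1 dvd 1 \<longrightarrow> a2 dvd 1 \<longrightarrow> \<alpha> (a1 * a2) 0 = \<alpha> a1 0 + \<alpha> a2 0) \<and>
         (\<forall>a b. a dvd 1 \<longrightarrow> \<alpha> a b = \<alpha> a 0 - uinv a * vdot b lam)"
proof (intro conjI allI impI)
  fix a1 a2 :: 'r assume "a1 dvd 1" "a2 dvd 1"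
  from hom[OF this, of 0 0] show "\<alpha> (a1 * a2) 0 = \<alpha> a1 0 + \<alpha> a2 0" by simp
next
  fix a :: 'r and b assume "a dvd 1"
  have "(2::'r) \<noteq> 0"
    using setting alg_setting_two_neq_zero arith_setting_two_neq_zero by blast
  from cocycle_decompose[OF this hom \<open>a dvd 1\<close>]
  show "\<alpha> a b = \<alpha> a 0 - uinv a * vdot b lam" .
qed

end
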